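(* In the standing setting, let $\lambda>0$ and suppose that $\dim\operatorname{span}\{\varphi\in D(\mathcal N_\lambda):(\mathcal N_\lambda^\circ\varphi,\varphi)_K=0\}=\infty$. Then $\sigma(\mathcal N_\lambda)\cap(-\infty,0)\neq\emptyset$.
   Context: Standing setting: $V,H,K$ complex Hilbert spaces, $V$ embedded in $H$ with compact inclusion $i\colon V\to H$, $j\colon V\to K$ compact linear, $\mathfrak a$ a positive, symmetric, continuous sesquilinear form on $V$ which is $i$-elliptic ($\mathfrak a(u,u)+\omega\|u\|_H^2\ge\delta\|u\|_V^2$ for some $\omega,\delta>0$). $\mathfrak b_\lambda(u,v)=\mathfrak a(u,v)-\lambda(u,v)_H$, and $\mathcal N_\lambda=\{(j(u),\psi)\in K\times K: u\in V,\ \mathfrak b_\lambda(u,v)=(\psi,j(v))_K\ \forall v\in V\}$, which is a self-adjoint graph in $K$ with compact resolvent. $D(\mathcal N_\lambda)$ is the set of first coordinates; the single-valued part $\mathcal N_\lambda^\circ$ is the self-adjoint operator in $\overline{D(\mathcal N_\lambda)}$ (closure in $K$) with graph $\mathcal N_\lambda\cap(\overline{D(\mathcal N_\lambda)}\times\overline{D(\mathcal N_\lambda)})$, and $\sigma(\mathcal N_\lambda):=\sigma(\mathcal N_\lambda^\circ)$. *)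

theory Defs
  imports "HOL-Analysis.Analysis"
begin

class complex_vector = real_vector +
  fixes scaleC :: "complex \<Rightarrow> 'a \<Rightarrow> 'a" (infixr \<open>*\<^sub>C\<close> 75)
  assumes scaleC_add_right: "a *\<^sub>C (x + y) = a *\<^sub>C x + a *\<^sub>C y"
    and scaleC_add_left: "(a + b) *\<^sub>C x = a *\<^sub>C x + b *\<^sub>C x"
    and scaleC_scaleC: "a *\<^sub>C (b *\<^sub>C x) = (a * b) *\<^sub>C x"
    and scaleC_one: "1 *\<^sub>C x = x"
    and scaleC_of_real: "(complex_of_real r) *\<^sub>C x = r *\<^sub>R x"

text \<open>Inner product: linear in the first argument, conjugate-linear in the second.\<close>
class complex_inner = complex_vector + real_normed_vector +
  fixes cinner :: "'a \<Rightarrow> 'a \<Rightarrow> complex"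
  assumes cinner_cnj_commute: "cinner x y = cnj (cinner y x)"
    and cinner_add_left: "cinner (x + y) z = cinner x z + cinner y z"
    and cinner_scaleC_left: "cinner (a *\<^sub>C x) y = a * cinner x y"
    and cinner_Re_ge_zero: "0 \<le> Re (cinner x x)"
    and cinner_eq_zero_iff: "cinner x x = 0 \<longleftrightarrow> x = 0"
    and norm_eq_sqrt_cinner: "norm x = sqrt (Re (cinner x x))"

class chilbert_space = complex_inner + complete_space

definition clinear :: "('a::complex_vector \<Rightarrow> 'b::complex_vector) \<Rightarrow> bool" where
  "clinear f \<longleftrightarrow> (\<forall>x y. f (x + y) = f x + f y) \<and> (\<forall>c x. f (c *\<^sub>C x) = c *\<^sub>C f x)"

definition compact_op :: "('a::complex_inner \<Rightarrow> 'b::complex_inner) \<Rightarrow> bool" where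
  "compact_op f \<longleftrightarrow> clinear f \<and> compact (closure (f ` {x. norm x \<le> 1}))"

definition cspan :: "'a::complex_vector set \<Rightarrow> 'a set" where
  "cspan S = {x. \<exists>B c. finite B \<and> B \<subseteq> S \<and> x = (\<Sum>b\<in>B. c b *\<^sub>C b)}"

definition infinite_cdim :: "'a::complex_vector set \<Rightarrow> bool" where
  "infinite_cdim S \<longleftrightarrow> \<not> (\<exists>B. finite B \<and> cspan S \<subseteq> cspan B)"

definition sesquilinear :: "('a::complex_vector \<Rightarrow> 'a \<Rightarrow> complex) \<Rightarrow> bool" where
  "sesquilinear a \<longleftrightarrow>
     (\<forall>u w v. a (u + w) v = a u v + a w v) \<and> (\<forall>c u v. a (c *\<^sub>C u) v = c * a u v) \<and>
     (\<forall>u v w. a u (v + w) = a u v + a u w) \<and> (\<forall>c u v. a u (c *\<^sub>C v) = cnj c * a u v)"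

definition symmetric_form :: "('a \<Rightarrow> 'a \<Rightarrow> complex) \<Rightarrow> bool" where
  "symmetric_form a \<longleftrightarrow> (\<forall>u v. a u v = cnj (a v u))"

definition positive_form :: "('a \<Rightarrow> 'a \<Rightarrow> complex) \<Rightarrow> bool" where
  "positive_form a \<longleftrightarrow> (\<forall>u. 0 \<le> Re (a u u) \<and> Im (a u u) = 0)"

definition bounded_form :: "('a::real_normed_vector \<Rightarrow> 'a \<Rightarrow> complex) \<Rightarrow> bool" where
  "bounded_form a \<longleftrightarrow> (\<exists>C. \<forall>u v. cmod (a u v) \<le> C * norm u * norm v)"

definition elliptic_form ::
  "('v::real_normed_vector \<Rightarrow> 'v \<Rightarrow> complex) \<Rightarrow> ('v \<Rightarrow> 'h::real_normed_vector) \<Rightarrow> bool" where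
  "elliptic_form a i \<longleftrightarrow> (\<exists>\<omega> \<delta>. \<omega> > 0 \<and> \<delta> > 0 \<and>
      (\<forall>u. Re (a u u) + \<omega> * (norm (i u))\<^sup>2 \<ge> \<delta> * (norm u)\<^sup>2))"

definition Ngraph ::
  "('v::complex_inner \<Rightarrow> 'v \<Rightarrow> complex) \<Rightarrow> ('v \<Rightarrow> 'h::complex_inner) \<Rightarrow> ('v \<Rightarrow> 'k::complex_inner)
    \<Rightarrow> real \<Rightarrow> ('k \<times> 'k) set" where
  "Ngraph a i j lam = {(j u, \<psi>) | u \<psi>.
      \<forall>v. a u v - complex_of_real lam * cinner (i u) (i v) = cinner \<psi> (j v)}"

definition graph_dom :: "('k \<times> 'k) set \<Rightarrow> 'k set" where
  "graph_dom N = fst ` N"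

text \<open>Single-valued (operator) part: the graph intersected with
  \<open>closure (D N) \<times> closure (D N)\<close>.\<close>
definition op_part :: "('k::topological_space \<times> 'k) set \<Rightarrow> ('k \<times> 'k) set" where
  "op_part N = N \<inter> (closure (graph_dom N) \<times> closure (graph_dom N))"

definition op_resolvent_set :: "'k::complex_inner set \<Rightarrow> ('k \<times> 'k) set \<Rightarrow> complex set" where
  "op_resolvent_set M A = {\<mu>.
      (\<forall>f\<in>M. \<exists>x y. (x, y) \<in> A \<and> y - \<mu> *\<^sub>C x = f) \<and>
      (\<exists>C. \<forall>(x, y)\<in>A. norm x \<le> C * norm (y - \<mu> *\<^sub>C x))}"

definition op_spectrum :: "'k::complex_inner set \<Rightarrow> ('k \<times> 'k) set \<Rightarrow> complex set" where
  "op_spectrum M A = UNIV - op_resolvent_set M A"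

text \<open>\<open>\<sigma>(\<N>) := \<sigma>(\<N>\<degree>)\<close>, the operator part acting in \<open>closure (D \<N>)\<close>.\<close>
definition graph_spectrum :: "('k::complex_inner \<times> 'k) set \<Rightarrow> complex set" where
  "graph_spectrum N = op_spectrum (closure (graph_dom N)) (op_part N)"

end

theory Submission
  imports Defs
begin

text \<open>
  Suppose \<open>\<sigma>(\<N>\<^sub>\<lambda>)\<close> has no negative points. Then the operator part \<open>A\<close> of \<open>\<N>\<^sub>\<lambda>\<close> is
  nonnegative. This is shown through the bounded symmetric operator \<open>R - R\<^sup>2\<close>, \<open>R = (A + 1)\<inverse>\<close>,
  whose quadratic form at \<open>(A + 1) x\<close> is \<open>(A x, x)\<close>: were the infimum \<open>m\<close> of its numerical
  range negative, \<open>m\<close> would be an approximate eigenvalue, whereas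
  \<open>R - R\<^sup>2 - m = -(R - t\<^sub>1)(R - t\<^sub>2)\<close> with \<open>t\<^sub>1 > 1\<close>, \<open>t\<^sub>2 < 0\<close> is bounded below because
  \<open>1/t\<^sub>k - 1 < 0\<close> lies in the resolvent set.
  For nonnegative \<open>A\<close>, \<open>(A x, x) = 0\<close> forces \<open>A x = 0\<close>, so all isotropic vectors lie in
  \<open>j\<close> applied to the kernel of \<open>b\<^sub>\<lambda>\<close>. That kernel is finite-dimensional: by ellipticity
  \<open>\<parallel>u\<parallel> \<le> C \<parallel>i u\<parallel>\<close> on it, and the compact operator \<open>i\<close> admits no infinite
  \<open>i\<close>-orthonormal system there.
\<close>

lemma scaleC_zero_left [simp]: "0 *\<^sub>C x = (0::'a::complex_vector)"
  using scaleC_of_real[of 0 x] by simp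

lemma scaleC_zero_right [simp]: "c *\<^sub>C (0::'a::complex_vector) = 0"
  using scaleC_add_right[of c 0 0] by simp

declare scaleC_one [simp]

lemma scaleC_minus_one [simp]: "(-1) *\<^sub>C x = - (x::'a::complex_vector)"
  using scaleC_of_real[of "-1" x] by simp

lemma scaleC_diff_right: "c *\<^sub>C (x - y) = c *\<^sub>C x - c *\<^sub>C (y::'a::complex_vector)"
  using scaleC_add_right[of c "x - y" y] by (simp add: eq_diff_eq)

lemma scaleC_sum_right: "c *\<^sub>C sum g B = (\<Sum>b\<in>B. c *\<^sub>C (g b :: 'a::complex_vector))"
  by (induction B rule: infinite_finite_induct) (simp_all add: scaleC_add_right)

lemma cinner_add_right: "cinner x (y + z) = cinner x y + cinner (x::'a::complex_inner) z"
  by (metis cinner_add_left cinner_cnj_commute complex_cnj_add)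

lemma cinner_scaleC_right: "cinner x (c *\<^sub>C y) = cnj c * cinner (x::'a::complex_inner) y"
  by (metis cinner_cnj_commute cinner_scaleC_left complex_cnj_mult)

lemma cinner_scaleR_left: "cinner (r *\<^sub>R x) y = of_real r * cinner (x::'a::complex_inner) y"
  by (simp add: scaleC_of_real[symmetric] cinner_scaleC_left)

lemma cinner_scaleR_right: "cinner x (r *\<^sub>R y) = of_real r * cinner (x::'a::complex_inner) y"
  by (simp add: scaleC_of_real[symmetric] cinner_scaleC_right)

lemma cinner_zero_left [simp]: "cinner 0 (x::'a::complex_inner) = 0"
  using cinner_add_left[of 0 0 x] by simp

lemma cinner_zero_right [simp]: "cinner (x::'a::complex_inner) 0 = 0"
  using cinner_add_right[of x 0 0] by simp

lemma cinner_diff_left: "cinner (x - y) z = cinner x z - cinner (y::'a::complex_inner) z"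
  using cinner_add_left[of "x - y" y z] by (simp add: eq_diff_eq)

lemma cinner_diff_right: "cinner x (y - z) = cinner x y - cinner (x::'a::complex_inner) z"
  using cinner_add_right[of x "y - z" z] by (simp add: eq_diff_eq)

lemma cinner_sum_left: "cinner (sum f B) y = (\<Sum>b\<in>B. cinner (f b) (y::'a::complex_inner))"
  by (induction B rule: infinite_finite_induct) (simp_all add: cinner_add_left)

lemma power2_norm_eq_cinner: "(norm x)\<^sup>2 = Re (cinner x (x::'a::complex_inner))"
  using norm_eq_sqrt_cinner[of x] cinner_Re_ge_zero[of x] by simp

lemma cinner_self_eq_norm: "cinner x x = complex_of_real ((norm (x::'a::complex_inner))\<^sup>2)"
proof -
  have "Im (cinner x x) = Im (cnj (cinner x x))"
    using cinner_cnj_commute[of x x] by simp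
  then show ?thesis
    by (simp add: complex_eq_iff power2_norm_eq_cinner)
qed

lemma Re_cinner_commute: "Re (cinner y x) = Re (cinner x (y::'a::complex_inner))"
  using cinner_cnj_commute[of y x] by simp

lemma norm_scaleC: "norm (c *\<^sub>C x) = cmod c * norm (x::'a::complex_inner)"
proof -
  have "cinner (c *\<^sub>C x) (c *\<^sub>C x) = (c * cnj c) * cinner x x"
    by (simp add: cinner_scaleC_left cinner_scaleC_right)
  also have "\<dots> = complex_of_real ((cmod c)\<^sup>2 * (norm x)\<^sup>2)"
    unfolding complex_norm_square[symmetric] cinner_self_eq_norm[of x] by simp
  finally have "(norm (c *\<^sub>C x))\<^sup>2 = (cmod c * norm x)\<^sup>2"
    unfolding power2_norm_eq_cinner[of "c *\<^sub>C x"] by (simp add: power_mult_distrib)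
  then show ?thesis
    by (simp add: power2_eq_iff_nonneg)
qed

lemma cauchy_schwarz: "cmod (cinner x y) \<le> norm x * norm (y::'a::complex_inner)"
proof (cases "y = 0")
  case False
  define Y where "Y = (norm y)\<^sup>2"
  define c where "c = cinner x y"
  have "Y > 0" using False by (simp add: Y_def)
  have cyx: "cinner y x = cnj c" by (simp add: c_def cinner_cnj_commute[of y x])
  have cyy: "cinner y y = complex_of_real Y" by (simp add: Y_def cinner_self_eq_norm)
  have "cinner (Y *\<^sub>C x - c *\<^sub>C y) (Y *\<^sub>C x - c *\<^sub>C y)
      = complex_of_real Y * (complex_of_real Y * cinner x x - c * cnj c)"
    by (simp add: cinner_diff_left cinner_diff_right cinner_scaleC_left cinner_scaleC_right
        cyx cyy c_def[symmetric])
  also have "\<dots> = complex_of_real (Y * (Y * (norm x)\<^sup>2 - (cmod c)\<^sup>2))"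
    unfolding cinner_self_eq_norm[of x] complex_norm_square[symmetric] by simp
  finally have "0 \<le> Y * (Y * (norm x)\<^sup>2 - (cmod c)\<^sup>2)"
    by (metis Re_complex_of_real cinner_Re_ge_zero)
  with \<open>Y > 0\<close> have "(cmod c)\<^sup>2 \<le> (norm x * norm y)\<^sup>2"
    by (simp add: Y_def zero_le_mult_iff power_mult_distrib mult.commute)
  then show ?thesis
    unfolding c_def by (rule power2_le_imp_le) simp
qed simp

lemma Re_cinner_le: "Re (cinner x y) \<le> norm x * norm (y::'a::complex_inner)"
  using cauchy_schwarz[of x y] complex_Re_le_cmod[of "cinner x y"] by linarith

lemma clinear_add: "clinear f \<Longrightarrow> f (x + y) = f x + f y"
  by (simp add: clinear_def)

lemma clinear_scaleC: "clinear f \<Longrightarrow> f (c *\<^sub>C x) = c *\<^sub>C f x"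
  by (simp add: clinear_def)

lemma clinear_zero: "clinear f \<Longrightarrow> f 0 = 0"
  using clinear_scaleC[of f 0 0] by simp

lemma clinear_diff: "clinear f \<Longrightarrow> f (x - y) = f x - f y"
  using clinear_add[of f "x - y" y] by (simp add: eq_diff_eq)

lemma clinear_scaleR: "clinear f \<Longrightarrow> f (r *\<^sub>R x) = r *\<^sub>R f x"
  using clinear_scaleC[of f "complex_of_real r" x] by (simp add: scaleC_of_real)

lemma clinear_sum: "clinear f \<Longrightarrow> f (sum g B) = (\<Sum>b\<in>B. f (g b))"
  by (induction B rule: infinite_finite_induct) (simp_all add: clinear_zero clinear_add)

definition csubspace :: "'a::complex_vector set \<Rightarrow> bool" where
  "csubspace S \<longleftrightarrow> 0 \<in> S \<and> (\<forall>x\<in>S. \<forall>y\<in>S. x + y \<in> S) \<and> (\<forall>c. \<forall>x\<in>S. c *\<^sub>C x \<in> S)"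

lemma csubspaceI:
  assumes "0 \<in> S" "\<And>x y. x \<in> S \<Longrightarrow> y \<in> S \<Longrightarrow> x + y \<in> S" "\<And>c x. x \<in> S \<Longrightarrow> c *\<^sub>C x \<in> S"
  shows "csubspace S"
  using assms unfolding csubspace_def by blast

lemma csubspace_0: "csubspace S \<Longrightarrow> 0 \<in> S"
  by (simp add: csubspace_def)

lemma csubspace_add: "csubspace S \<Longrightarrow> x \<in> S \<Longrightarrow> y \<in> S \<Longrightarrow> x + y \<in> S"
  by (simp add: csubspace_def)

lemma csubspace_scaleC: "csubspace S \<Longrightarrow> x \<in> S \<Longrightarrow> c *\<^sub>C x \<in> S"
  by (simp add: csubspace_def)

lemma csubspace_scaleR: "csubspace S \<Longrightarrow> x \<in> S \<Longrightarrow> r *\<^sub>R x \<in> S"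
  using csubspace_scaleC[of S x "complex_of_real r"] by (simp add: scaleC_of_real)

lemma csubspace_diff: "csubspace S \<Longrightarrow> x \<in> S \<Longrightarrow> y \<in> S \<Longrightarrow> x - y \<in> S"
  using csubspace_add[of S x "(-1) *\<^sub>C y"] csubspace_scaleC[of S y "-1"] by simp

lemma csubspace_sum:
  "csubspace S \<Longrightarrow> (\<And>b. b \<in> B \<Longrightarrow> g b \<in> S) \<Longrightarrow> sum g B \<in> S"
  by (induction B rule: infinite_finite_induct) (simp_all add: csubspace_0 csubspace_add)

lemma csubspace_closure:
  fixes S :: "'a::complex_inner set"
  assumes "csubspace S"
  shows "csubspace (closure S)"
proof (rule csubspaceI)
  show "0 \<in> closure S"
    using assms csubspace_0 closure_subset by blast
next
  fix x y assume "x \<in> closure S" "y \<in> closure S"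
  then obtain f g where f: "\<forall>n. f n \<in> S" "f \<longlonglongrightarrow> x" and g: "\<forall>n. g n \<in> S" "g \<longlonglongrightarrow> y"
    unfolding closure_sequential by blast
  have "\<forall>n. f n + g n \<in> S"
    using f(1) g(1) assms csubspace_add by blast
  moreover have "(\<lambda>n. f n + g n) \<longlonglongrightarrow> x + y"
    using f(2) g(2) by (rule tendsto_add)
  ultimately show "x + y \<in> closure S"
    unfolding closure_sequential by (intro exI[of _ "\<lambda>n. f n + g n"] conjI)
next
  fix c x assume "x \<in> closure S"
  then obtain f where f: "\<forall>n. f n \<in> S" "f \<longlonglongrightarrow> x"
    unfolding closure_sequential by blast
  have "(\<lambda>n. cmod c * norm (f n - x)) \<longlonglongrightarrow> 0"
    using f(2) by (intro tendsto_mult_right_zero tendsto_norm_zero LIM_zero)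
  then have "(\<lambda>n. norm (c *\<^sub>C f n - c *\<^sub>C x)) \<longlonglongrightarrow> 0"
    by (simp add: scaleC_diff_right[symmetric] norm_scaleC)
  then have "(\<lambda>n. c *\<^sub>C f n) \<longlonglongrightarrow> c *\<^sub>C x"
    by (rule LIM_zero_cancel[OF tendsto_norm_zero_cancel])
  moreover have "\<forall>n. c *\<^sub>C f n \<in> S"
    using f(1) assms csubspace_scaleC by blast
  ultimately show "c *\<^sub>C x \<in> closure S"
    unfolding closure_sequential by (intro exI[of _ "\<lambda>n. c *\<^sub>C f n"] conjI)
qed

lemma cspan_subset_csubspace:
  assumes "csubspace S" "X \<subseteq> S"
  shows "cspan X \<subseteq> S"
proof
  fix x assume "x \<in> cspan X"
  then obtain B c where B: "B \<subseteq> X" "x = (\<Sum>b\<in>B. c b *\<^sub>C b)"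
    unfolding cspan_def by blast
  have "(\<Sum>b\<in>B. c b *\<^sub>C b) \<in> S"
  proof (rule csubspace_sum[OF assms(1)])
    fix b assume "b \<in> B"
    then show "c b *\<^sub>C b \<in> S"
      using B(1) assms by (blast intro: csubspace_scaleC)
  qed
  then show "x \<in> S"
    using B(2) by simp
qed

lemma csubspace_cspan: "csubspace (cspan X)"
proof (rule csubspaceI)
  show "0 \<in> cspan X"
    unfolding cspan_def by (intro CollectI exI[of _ "{}"]) simp
next
  fix c x assume "x \<in> cspan X"
  then obtain B d where B: "finite B" "B \<subseteq> X" "x = (\<Sum>b\<in>B. d b *\<^sub>C b)"
    unfolding cspan_def by blast
  then have "c *\<^sub>C x = (\<Sum>b\<in>B. (c * d b) *\<^sub>C b)"
    by (simp add: scaleC_sum_right scaleC_scaleC)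
  with B(1,2) show "c *\<^sub>C x \<in> cspan X"
    unfolding cspan_def by (intro CollectI exI[of _ B] exI[of _ "\<lambda>b. c * d b"]) simp
next
  fix x y assume "x \<in> cspan X" "y \<in> cspan X"
  then obtain B1 c1 B2 c2 where B1: "finite B1" "B1 \<subseteq> X" "x = (\<Sum>b\<in>B1. c1 b *\<^sub>C b)"
    and B2: "finite B2" "B2 \<subseteq> X" "y = (\<Sum>b\<in>B2. c2 b *\<^sub>C b)"
    unfolding cspan_def by blast
  define c where "c b = (if b \<in> B1 then c1 b else 0) + (if b \<in> B2 then c2 b else 0)" for b
  have fin: "finite (B1 \<union> B2)" using B1 B2 by simp
  have e1: "(\<Sum>b\<in>B1 \<union> B2. (if b \<in> B1 then c1 b else 0) *\<^sub>C b) = x"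
    unfolding B1(3) by (rule sum.mono_neutral_cong_right[OF fin]) auto
  have e2: "(\<Sum>b\<in>B1 \<union> B2. (if b \<in> B2 then c2 b else 0) *\<^sub>C b) = y"
    unfolding B2(3) by (rule sum.mono_neutral_cong_right[OF fin]) auto
  have "x + y = (\<Sum>b\<in>B1 \<union> B2. c b *\<^sub>C b)"
    unfolding c_def scaleC_add_left sum.distrib e1 e2 ..
  with fin B1(2) B2(2) show "x + y \<in> cspan X"
    unfolding cspan_def by (intro CollectI exI[of _ "B1 \<union> B2"] exI[of _ c]) simp
qed

lemma cspan_superset: "X \<subseteq> cspan X"
proof
  fix x assume "x \<in> X"
  then show "x \<in> cspan X"
    unfolding cspan_def by (intro CollectI exI[of _ "{x}"] exI[of _ "\<lambda>_. 1"]) simp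
qed

lemma cspan_mono: "X \<subseteq> cspan Y \<Longrightarrow> cspan X \<subseteq> cspan Y"
  by (rule cspan_subset_csubspace[OF csubspace_cspan])

lemma cspan_image:
  assumes "clinear f"
  shows "f ` cspan X \<subseteq> cspan (f ` X)"
proof
  fix y assume "y \<in> f ` cspan X"
  then obtain B c where B: "finite B" "B \<subseteq> X" "y = f (\<Sum>b\<in>B. c b *\<^sub>C b)"
    unfolding cspan_def by blast
  have "y = (\<Sum>b\<in>B. c b *\<^sub>C f b)"
    unfolding B(3) by (simp add: clinear_sum[OF assms] clinear_scaleC[OF assms])
  also have "\<dots> \<in> cspan (f ` X)"
    using B(2) cspan_superset[of "f ` X"]
    by (intro csubspace_sum[OF csubspace_cspan] csubspace_scaleC[OF csubspace_cspan]) blast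
  finally show "y \<in> cspan (f ` X)" .
qed

definition orthonormal_upto :: "nat \<Rightarrow> (nat \<Rightarrow> 'a::complex_inner) \<Rightarrow> bool" where
  "orthonormal_upto n f \<longleftrightarrow> (\<forall>k<n. \<forall>l<n. cinner (f k) (f l) = (if k = l then 1 else 0))"

lemma orthonormal_upto_Suc:
  assumes "orthonormal_upto n f" "\<And>l. l < n \<Longrightarrow> cinner g (f l) = 0" "cinner g g = 1"
  shows "orthonormal_upto (Suc n) (f(n := g))"
  unfolding orthonormal_upto_def
proof (intro allI impI)
  fix k l assume "k < Suc n" "l < Suc n"
  have "cinner (f k) g = 0" if "k < n" for k
    using assms(2)[OF that] cinner_cnj_commute[of "f k" g] by simp
  with assms \<open>k < Suc n\<close> \<open>l < Suc n\<close>
  show "cinner ((f(n := g)) k) ((f(n := g)) l) = (if k = l then 1 else 0)"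
    unfolding orthonormal_upto_def less_Suc_eq by fastforce
qed

lemma orthonormal_upto_dist:
  assumes "orthonormal_upto n f" "k < n" "l < n" "k \<noteq> l"
  shows "dist (f k) (f l) = sqrt 2"
proof -
  have "(dist (f k) (f l))\<^sup>2 = 2"
    using assms cinner_cnj_commute[of "f l" "f k"]
    by (simp add: dist_norm power2_norm_eq_cinner cinner_diff_left cinner_diff_right
        orthonormal_upto_def)
  then show ?thesis
    by (metis zero_le_dist real_sqrt_unique)
qed

lemma compact_separated_bounded:
  fixes S :: "'a::metric_space set"
  assumes "compact S" "\<epsilon> > 0"
  obtains N :: nat where "\<And>n (p :: nat \<Rightarrow> 'a). (\<And>k. k < n \<Longrightarrow> p k \<in> S) \<Longrightarrow>
      (\<And>k l. k < n \<Longrightarrow> l < n \<Longrightarrow> k \<noteq> l \<Longrightarrow> \<epsilon> \<le> dist (p k) (p l)) \<Longrightarrow> n \<le> N"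
proof -
  have "\<exists>C. finite C \<and> C \<subseteq> S \<and> S \<subseteq> (\<Union>c\<in>C. ball c (\<epsilon> / 2))"
    using seq_compact_imp_totally_bounded[OF compact_imp_seq_compact[OF assms(1)]] assms(2)
    by simp
  then obtain C where C: "finite C" "S \<subseteq> (\<Union>c\<in>C. ball c (\<epsilon> / 2))"
    by blast
  show ?thesis
  proof (rule that[of "card C"])
    fix n and p :: "nat \<Rightarrow> 'a"
    assume p: "\<And>k. k < n \<Longrightarrow> p k \<in> S"
      and sep: "\<And>k l. k < n \<Longrightarrow> l < n \<Longrightarrow> k \<noteq> l \<Longrightarrow> \<epsilon> \<le> dist (p k) (p l)"
    have "\<forall>k\<in>{..<n}. \<exists>c\<in>C. dist c (p k) < \<epsilon> / 2"
      using p C(2) by (auto simp: subset_eq)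
    then obtain g where g: "\<And>k. k < n \<Longrightarrow> g k \<in> C \<and> dist (g k) (p k) < \<epsilon> / 2"
      by (metis bchoice lessThan_iff)
    \<comment> \<open>by separation no centre of the cover is close to two of the points\<close>
    have "inj_on g {..<n}"
    proof (rule inj_onI, rule ccontr)
      fix k l assume kl: "k \<in> {..<n}" "l \<in> {..<n}" "g k = g l" "k \<noteq> l"
      then have "dist (p k) (p l) < \<epsilon>"
        using g[of k] g[of l] dist_triangle_half_r[of "g k" "p k" \<epsilon> "p l"] by simp
      with sep kl show False
        by (meson lessThan_iff not_le)
    qed
    then have "card {..<n} \<le> card C"
      using g C(1) by (intro card_inj_on_le) auto
    then show "n \<le> card C" by simp
  qed
qed

lemma orthonormal_upto_residual_orthogonal:
  assumes "orthonormal_upto n f" "l < n"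
  shows "cinner (x - (\<Sum>k<n. cinner x (f k) *\<^sub>C f k)) (f l) = 0"
proof -
  have "cinner (\<Sum>k<n. cinner x (f k) *\<^sub>C f k) (f l) = (\<Sum>k<n. cinner x (f k) * cinner (f k) (f l))"
    by (simp add: cinner_sum_left cinner_scaleC_left)
  also have "\<dots> = (\<Sum>k<n. cinner x (f k) * (if k = l then 1 else 0))"
    using assms unfolding orthonormal_upto_def by (intro sum.cong) auto
  also have "\<dots> = cinner x (f l)"
    using assms(2) by (simp add: if_distrib sum.delta cong: if_cong)
  finally show ?thesis
    by (simp add: cinner_diff_left)
qed

text \<open>Gram--Schmidt for the inner product pulled back along \<open>i\<close>.\<close>
lemma exists_orthonormal_upto_image:
  fixes i :: "'v::complex_vector \<Rightarrow> 'h::complex_inner"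
  assumes i: "clinear i" and E: "csubspace E" and inj: "\<And>u. u \<in> E \<Longrightarrow> i u = 0 \<Longrightarrow> u = 0"
    and inf: "infinite_cdim E"
  shows "\<exists>e. (\<forall>k<n. e k \<in> E) \<and> orthonormal_upto n (i \<circ> e)"
proof (induction n)
  case 0
  show ?case by (simp add: orthonormal_upto_def)
next
  case (Suc n)
  then obtain e where e: "\<forall>k<n. e k \<in> E" "orthonormal_upto n (i \<circ> e)"
    by blast
  have "\<not> E \<subseteq> cspan (e ` {..<n})"
    using inf cspan_mono[of E "e ` {..<n}"] unfolding infinite_cdim_def by blast
  then obtain u where u: "u \<in> E" "u \<notin> cspan (e ` {..<n})"
    by blast
  define p where "p = (\<Sum>k<n. cinner (i u) (i (e k)) *\<^sub>C e k)"
  define w where "w = u - p"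
  have "p \<in> cspan (e ` {..<n})"
    unfolding p_def using cspan_superset[of "e ` {..<n}"]
    by (intro csubspace_sum[OF csubspace_cspan] csubspace_scaleC[OF csubspace_cspan]) auto
  with u(2) have "w \<noteq> 0"
    unfolding w_def by auto
  have "p \<in> E"
    unfolding p_def using E e(1) by (intro csubspace_sum csubspace_scaleC) auto
  then have "w \<in> E"
    unfolding w_def using E u(1) by (rule csubspace_diff[rotated 2])
  with inj \<open>w \<noteq> 0\<close> have "i w \<noteq> 0"
    by blast
  have "i w = i u - (\<Sum>k<n. cinner (i u) ((i \<circ> e) k) *\<^sub>C (i \<circ> e) k)"
    unfolding w_def p_def by (simp add: clinear_diff[OF i] clinear_sum[OF i] clinear_scaleC[OF i])
  then have orth: "cinner (i w) (i (e l)) = 0" if "l < n" for l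
    using orthonormal_upto_residual_orthogonal[OF e(2) that] by simp
  define e' where "e' = (1 / norm (i w)) *\<^sub>R w"
  have "cinner (i e') (i e') = 1"
    using \<open>i w \<noteq> 0\<close> unfolding e'_def
    by (simp add: clinear_scaleR[OF i] cinner_scaleR_left cinner_scaleR_right cinner_self_eq_norm
        power2_eq_square)
  moreover have "cinner (i e') (i (e l)) = 0" if "l < n" for l
    using orth[OF that] by (simp add: e'_def clinear_scaleR[OF i] cinner_scaleR_left)
  ultimately have "orthonormal_upto (Suc n) ((i \<circ> e)(n := i e'))"
    using orthonormal_upto_Suc[OF e(2)] by simp
  moreover have "\<forall>k<Suc n. (e(n := e')) k \<in> E"
    using e(1) \<open>w \<in> E\<close> E unfolding e'_def by (simp add: less_Suc_eq csubspace_scaleR)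
  ultimately show ?case
    by (metis fun_upd_comp)
qed

lemma compact_op_orthonormal_upto_bounded:
  fixes i :: "'v::complex_inner \<Rightarrow> 'h::complex_inner"
  assumes i: "compact_op i" and "K > 0"
  shows "\<exists>N. \<forall>n e. (\<forall>k<n. norm (e k) \<le> K) \<and> orthonormal_upto n (i \<circ> e) \<longrightarrow> n \<le> N"
proof -
  have lin: "clinear i"
    using i unfolding compact_op_def by blast
  define S where "S = closure (i ` {x. norm x \<le> 1})"
  have "compact S"
    using i unfolding compact_op_def S_def by blast
  have "sqrt 2 / K > 0"
    using \<open>K > 0\<close> by simp
  obtain N where N: "\<And>n (p :: nat \<Rightarrow> 'h). (\<And>k. k < n \<Longrightarrow> p k \<in> S) \<Longrightarrow>
      (\<And>k l. k < n \<Longrightarrow> l < n \<Longrightarrow> k \<noteq> l \<Longrightarrow> sqrt 2 / K \<le> dist (p k) (p l)) \<Longrightarrow> n \<le> N"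
    using compact_separated_bounded[OF \<open>compact S\<close> \<open>sqrt 2 / K > 0\<close>] by metis
  have "n \<le> N" if e: "\<forall>k<n. norm (e k) \<le> K" "orthonormal_upto n (i \<circ> e)" for n e
  proof (rule N)
    fix k assume "k < n"
    then have "norm ((1 / K) *\<^sub>R e k) \<le> 1"
      using e(1) \<open>K > 0\<close> by (simp add: divide_le_eq_1)
    then show "i ((1 / K) *\<^sub>R e k) \<in> S"
      unfolding S_def by (blast intro: closure_subset[THEN subsetD])
  next
    fix k l assume "k < n" "l < n" "k \<noteq> l"
    then have "dist (i (e k)) (i (e l)) = sqrt 2"
      using orthonormal_upto_dist[OF e(2)] by simp
    then show "sqrt 2 / K \<le> dist (i ((1 / K) *\<^sub>R e k)) (i ((1 / K) *\<^sub>R e l))"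
      using \<open>K > 0\<close> by (simp add: clinear_scaleR[OF lin] dist_norm scaleR_diff_right[symmetric])
  qed
  then show ?thesis
    by blast
qed

lemma compact_op_dominated_not_infinite_cdim:
  fixes i :: "'v::complex_inner \<Rightarrow> 'h::complex_inner"
  assumes i: "compact_op i" and E: "csubspace E"
    and dom: "\<And>u. u \<in> E \<Longrightarrow> norm u \<le> C * norm (i u)"
  shows "\<not> infinite_cdim E"
proof
  assume inf: "infinite_cdim E"
  define K where "K = max C 1"
  have "K > 0" by (simp add: K_def)
  have domK: "norm u \<le> K * norm (i u)" if "u \<in> E" for u
    using dom[OF that] by (smt (verit) K_def mult_right_mono norm_ge_zero)
  have inj: "u = 0" if "u \<in> E" "i u = 0" for u
    using domK[OF that(1)] that(2) by simp
  obtain N where N: "\<And>n e. \<forall>k<n. norm (e k) \<le> K \<Longrightarrow> orthonormal_upto n (i \<circ> e) \<Longrightarrow> n \<le> N"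
    using compact_op_orthonormal_upto_bounded[OF i \<open>K > 0\<close>] by blast
  have "clinear i"
    using i unfolding compact_op_def by blast
  then obtain e where e: "\<forall>k<Suc N. e k \<in> E" "orthonormal_upto (Suc N) (i \<circ> e)"
    using exists_orthonormal_upto_image[OF _ E inj inf] by blast
  have "norm (e k) \<le> K" if "k < Suc N" for k
  proof -
    have "(norm (i (e k)))\<^sup>2 = 1"
      using e(2) that by (simp add: power2_norm_eq_cinner orthonormal_upto_def)
    then have "norm (i (e k)) = 1"
      by (metis norm_ge_zero power2_eq_1_iff neg_0_le_iff_le not_one_le_zero)
    with domK e(1) that show ?thesis
      by fastforce
  qed
  then have "Suc N \<le> N"
    using N e(2) by blast
  then show False
    by simp
qed

lemma nonneg_symmetric_norm_square_le:
  fixes S :: "'a::complex_inner \<Rightarrow> 'a"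
  assumes M: "csubspace M" and maps: "\<And>z. z \<in> M \<Longrightarrow> S z \<in> M"
    and lin: "\<And>z w t. z \<in> M \<Longrightarrow> w \<in> M \<Longrightarrow> S (z - t *\<^sub>R w) = S z - t *\<^sub>R S w"
    and sym: "\<And>z w. z \<in> M \<Longrightarrow> w \<in> M \<Longrightarrow> cinner (S z) w = cinner z (S w)"
    and bdd: "\<And>z. z \<in> M \<Longrightarrow> norm (S z) \<le> K * norm z" and "K > 0"
    and nonneg: "\<And>z. z \<in> M \<Longrightarrow> 0 \<le> Re (cinner (S z) z)"
    and "z \<in> M"
  shows "(norm (S z))\<^sup>2 \<le> K * Re (cinner (S z) z)"
proof -
  define w where "w = S z"
  define t where "t = 1 / K"
  have "w \<in> M"
    unfolding w_def using maps \<open>z \<in> M\<close> .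
  have "Re (cinner (S w) w) \<le> K * (norm w)\<^sup>2"
    using Re_cinner_le[of "S w" w] bdd[OF \<open>w \<in> M\<close>]
    by (smt (verit) mult_right_mono norm_ge_zero power2_eq_square mult.assoc)
  \<comment> \<open>test the nonnegativity of \<open>S\<close> at \<open>z - w/K\<close>\<close>
  have "0 \<le> Re (cinner (S (z - t *\<^sub>R w)) (z - t *\<^sub>R w))"
    using nonneg M \<open>z \<in> M\<close> \<open>w \<in> M\<close> by (simp add: csubspace_diff csubspace_scaleR)
  also have "\<dots> = Re (cinner w z) - 2 * t * (norm w)\<^sup>2 + t\<^sup>2 * Re (cinner (S w) w)"
    using sym[OF \<open>w \<in> M\<close> \<open>z \<in> M\<close>]
    by (simp add: lin[OF \<open>z \<in> M\<close> \<open>w \<in> M\<close>] w_def[symmetric] cinner_diff_left cinner_diff_right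
        cinner_scaleR_left cinner_scaleR_right power2_norm_eq_cinner[unfolded power2_eq_square]
        power2_eq_square algebra_simps)
  also have "\<dots> \<le> Re (cinner w z) - 2 * t * (norm w)\<^sup>2 + t\<^sup>2 * (K * (norm w)\<^sup>2)"
    using \<open>Re (cinner (S w) w) \<le> K * (norm w)\<^sup>2\<close> by (simp add: mult_left_mono)
  also have "\<dots> = Re (cinner w z) - (norm w)\<^sup>2 / K"
    unfolding t_def using \<open>K > 0\<close> by (simp add: field_simps power2_eq_square)
  finally show ?thesis
    unfolding w_def using \<open>K > 0\<close> by (simp add: field_simps)
qed

locale hermitian_relation_without_negative_spectrum =
  fixes N :: "('k::complex_inner \<times> 'k) set"
  assumes rel_zero: "(0, 0) \<in> N"
    and rel_add: "(x, y) \<in> N \<Longrightarrow> (x', y') \<in> N \<Longrightarrow> (x + x', y + y') \<in> N"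
    and rel_scaleC: "(x, y) \<in> N \<Longrightarrow> (c *\<^sub>C x, c *\<^sub>C y) \<in> N"
    and rel_hermitian: "(x, y) \<in> N \<Longrightarrow> (x', y') \<in> N \<Longrightarrow> cinner y x' = cnj (cinner y' x)"
    and negative_resolvent:
      "\<And>\<mu>::real. \<mu> < 0 \<Longrightarrow> complex_of_real \<mu> \<in> op_resolvent_set (closure (graph_dom N)) (op_part N)"
begin

abbreviation "M \<equiv> closure (graph_dom N)"
abbreviation "A \<equiv> op_part N"

lemma op_part_iff: "(x, y) \<in> A \<longleftrightarrow> (x, y) \<in> N \<and> x \<in> M \<and> y \<in> M"
  unfolding op_part_def by auto

lemma csubspace_M: "csubspace M"
proof (rule csubspace_closure, rule csubspaceI)
  show "0 \<in> graph_dom N"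
    unfolding graph_dom_def using rel_zero by force
next
  fix x x' assume "x \<in> graph_dom N" "x' \<in> graph_dom N"
  then obtain y y' where "(x, y) \<in> N" "(x', y') \<in> N"
    unfolding graph_dom_def by force
  then have "(x + x', y + y') \<in> N"
    by (rule rel_add)
  then show "x + x' \<in> graph_dom N"
    unfolding graph_dom_def by force
next
  fix c x assume "x \<in> graph_dom N"
  then obtain y where "(x, y) \<in> N"
    unfolding graph_dom_def by force
  then have "(c *\<^sub>C x, c *\<^sub>C y) \<in> N"
    by (rule rel_scaleC)
  then show "c *\<^sub>C x \<in> graph_dom N"
    unfolding graph_dom_def by force
qed

lemma op_part_add: "(x, y) \<in> A \<Longrightarrow> (x', y') \<in> A \<Longrightarrow> (x + x', y + y') \<in> A"
  unfolding op_part_iff using rel_add csubspace_add[OF csubspace_M] by blast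

lemma op_part_scaleC: "(x, y) \<in> A \<Longrightarrow> (c *\<^sub>C x, c *\<^sub>C y) \<in> A"
  unfolding op_part_iff using rel_scaleC csubspace_scaleC[OF csubspace_M] by blast

lemma op_part_diff: "(x, y) \<in> A \<Longrightarrow> (x', y') \<in> A \<Longrightarrow> (x - x', y - y') \<in> A"
  using op_part_add[of x y "(-1) *\<^sub>C x'" "(-1) *\<^sub>C y'"] op_part_scaleC[of x' y' "-1"] by simp

lemma op_part_bounded_below:
  assumes "\<mu> < 0"
  shows "\<exists>C\<ge>0. \<forall>x y. (x, y) \<in> A \<longrightarrow> norm x \<le> C * norm (y - \<mu> *\<^sub>R x)"
proof -
  obtain C where C: "\<forall>(x, y)\<in>A. norm x \<le> C * norm (y - complex_of_real \<mu> *\<^sub>C x)"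
    using negative_resolvent[OF assms] unfolding op_resolvent_set_def by blast
  have "norm x \<le> max C 0 * norm (y - \<mu> *\<^sub>R x)" if "(x, y) \<in> A" for x y
  proof -
    have "norm x \<le> C * norm (y - \<mu> *\<^sub>R x)"
      using C that by (auto simp: scaleC_of_real)
    also have "\<dots> \<le> max C 0 * norm (y - \<mu> *\<^sub>R x)"
      by (simp add: mult_right_mono)
    finally show ?thesis .
  qed
  then show ?thesis
    by (intro exI[of _ "max C 0"]) simp
qed

text \<open>The resolvent \<open>(A + 1)\<inverse>\<close>, a bounded operator on \<open>M\<close>.\<close>
definition resolvent :: "'k \<Rightarrow> 'k" where
  "resolvent z = (SOME x. (x, z - x) \<in> A)"

lemma resolvent_pair:
  assumes "z \<in> M"
  shows "(resolvent z, z - resolvent z) \<in> A"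
proof -
  have "\<forall>f\<in>M. \<exists>x y. (x, y) \<in> A \<and> y - complex_of_real (-1) *\<^sub>C x = f"
    using negative_resolvent[of "-1"] unfolding op_resolvent_set_def by simp
  with assms obtain x y where "(x, y) \<in> A" "y + x = z"
    by (auto simp: scaleC_of_real)
  then have "(x, z - x) \<in> A"
    by (metis add_diff_cancel_right')
  then show ?thesis
    unfolding resolvent_def by (rule someI)
qed

lemma resolvent_in_M: "z \<in> M \<Longrightarrow> resolvent z \<in> M"
  using resolvent_pair op_part_iff by blast

lemma resolvent_unique:
  assumes "(x, y) \<in> A"
  shows "resolvent (y + x) = x"
proof -
  obtain C where C: "\<And>x y. (x, y) \<in> A \<Longrightarrow> norm x \<le> C * norm (y + x)"
    using op_part_bounded_below[of "-1"] by auto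
  have "y + x \<in> M"
    using assms csubspace_add[OF csubspace_M] unfolding op_part_iff by blast
  then have "(x - resolvent (y + x), y - (y + x - resolvent (y + x))) \<in> A"
    using op_part_diff[OF assms resolvent_pair] by blast
  from C[OF this] have "norm (x - resolvent (y + x)) \<le> 0"
    by (simp add: algebra_simps)
  then show ?thesis
    by simp
qed

lemma resolvent_zero: "resolvent 0 = 0"
proof -
  have "(0, 0) \<in> A"
    using rel_zero csubspace_0[OF csubspace_M] unfolding op_part_iff by blast
  from resolvent_unique[OF this] show ?thesis
    by simp
qed

lemma resolvent_bounded: "\<exists>C\<ge>0. \<forall>z\<in>M. norm (resolvent z) \<le> C * norm z"
proof -
  obtain C where "C \<ge> 0" and C: "\<And>x y. (x, y) \<in> A \<Longrightarrow> norm x \<le> C * norm (y + x)"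
    using op_part_bounded_below[of "-1"] by auto
  have "norm (resolvent z) \<le> C * norm z" if "z \<in> M" for z
    using C[OF resolvent_pair[OF that]] by simp
  with \<open>C \<ge> 0\<close> show ?thesis
    by blast
qed

lemma resolvent_diff_scaleR:
  assumes "z \<in> M" "w \<in> M"
  shows "resolvent (z - t *\<^sub>R w) = resolvent z - t *\<^sub>R resolvent w"
proof -
  have "(resolvent z - t *\<^sub>R resolvent w, (z - resolvent z) - t *\<^sub>R (w - resolvent w)) \<in> A"
    using op_part_diff[OF resolvent_pair[OF assms(1)]
        op_part_scaleC[OF resolvent_pair[OF assms(2)], of "complex_of_real t"]]
    by (simp add: scaleC_of_real)
  from resolvent_unique[OF this] show ?thesis
    by (simp add: algebra_simps)
qed

lemma resolvent_symmetric:
  assumes "z \<in> M" "w \<in> M"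
  shows "cinner (resolvent z) w = cinner z (resolvent w)"
proof -
  let ?Rz = "resolvent z" and ?Rw = "resolvent w"
  have "cinner (z - ?Rz) ?Rw = cnj (cinner (w - ?Rw) ?Rz)"
    using rel_hermitian resolvent_pair assms op_part_iff by blast
  also have "\<dots> = cinner ?Rz (w - ?Rw)"
    by (simp add: cinner_cnj_commute[of ?Rz])
  finally show ?thesis
    by (simp add: cinner_diff_left cinner_diff_right eq_diff_eq)
qed

lemma resolvent_minus_bounded_below:
  assumes "t < 0 \<or> 1 < t"
  shows "\<exists>\<gamma>>0. \<forall>z\<in>M. \<gamma> * norm z \<le> norm (resolvent z - t *\<^sub>R z)"
proof -
  have "t \<noteq> 0" "1 / t - 1 < 0"
    using assms by (auto simp: divide_less_eq)
  \<comment> \<open>\<open>R - t = -t R (A - (1/t - 1))\<close> on \<open>M\<close>, and \<open>1/t - 1\<close> is a negative resolvent point\<close>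
  then obtain C where C: "C \<ge> 0" "\<And>x y. (x, y) \<in> A \<Longrightarrow> norm x \<le> C * norm (y - (1 / t - 1) *\<^sub>R x)"
    using op_part_bounded_below by blast
  define \<gamma> where "\<gamma> = \<bar>t\<bar> / (C / \<bar>t\<bar> + 1)"
  show ?thesis
  proof (intro exI[of _ \<gamma>] conjI ballI)
    show "\<gamma> > 0"
      unfolding \<gamma>_def using \<open>t \<noteq> 0\<close> C(1) by (simp add: add_nonneg_pos)
  next
    fix z assume z: "z \<in> M"
    define d where "d = norm (resolvent z - t *\<^sub>R z)"
    have "(z - resolvent z) - (1 / t - 1) *\<^sub>R resolvent z = - ((1 / t) *\<^sub>R (resolvent z - t *\<^sub>R z))"
      using \<open>t \<noteq> 0\<close> by (simp add: algebra_simps scaleR_diff_right)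
    then have "norm (resolvent z) \<le> C * (d / \<bar>t\<bar>)"
      using C(2)[OF resolvent_pair[OF z]] unfolding d_def by simp
    moreover have "\<bar>t\<bar> * norm z \<le> norm (resolvent z) + d"
      using norm_triangle_ineq4[of "resolvent z" "resolvent z - t *\<^sub>R z"] unfolding d_def by simp
    ultimately have "\<bar>t\<bar> * norm z \<le> (C / \<bar>t\<bar> + 1) * d"
      by (simp add: algebra_simps)
    then show "\<gamma> * norm z \<le> d"
      unfolding \<gamma>_def using \<open>t \<noteq> 0\<close> C(1)
      by (simp add: field_simps add_nonneg_pos)
  qed
qed

definition qform :: "'k \<Rightarrow> real" where
  "qform z = Re (cinner (resolvent z) z) - (norm (resolvent z))\<^sup>2"

lemma qform_op_part:
  assumes "(x, y) \<in> A"
  shows "qform (y + x) = Re (cinner y x)"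
  using resolvent_unique[OF assms] Re_cinner_commute[of y x]
  by (simp add: qform_def cinner_add_right power2_norm_eq_cinner)

lemma qform_zero: "qform 0 = 0"
  by (simp add: qform_def resolvent_zero)

definition shifted_op :: "real \<Rightarrow> 'k \<Rightarrow> 'k" where
  "shifted_op m z = resolvent z - resolvent (resolvent z) - m *\<^sub>R z"

lemma shifted_op_in_M: "z \<in> M \<Longrightarrow> shifted_op m z \<in> M"
  unfolding shifted_op_def using csubspace_M
  by (intro csubspace_diff csubspace_scaleR resolvent_in_M)

lemma shifted_op_diff_scaleR:
  "z \<in> M \<Longrightarrow> w \<in> M \<Longrightarrow> shifted_op m (z - t *\<^sub>R w) = shifted_op m z - t *\<^sub>R shifted_op m w"
  unfolding shifted_op_def
  by (simp add: resolvent_diff_scaleR resolvent_in_M algebra_simps scaleR_diff_right)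

lemma shifted_op_symmetric:
  assumes "z \<in> M" "w \<in> M"
  shows "cinner (shifted_op m z) w = cinner z (shifted_op m w)"
  using resolvent_symmetric[OF assms] resolvent_symmetric[OF resolvent_in_M[OF assms(1)] assms(2)]
    resolvent_symmetric[OF assms(1) resolvent_in_M[OF assms(2)]]
  by (simp add: shifted_op_def cinner_diff_left cinner_diff_right cinner_scaleR_left cinner_scaleR_right)

lemma Re_cinner_shifted_op:
  assumes "z \<in> M"
  shows "Re (cinner (shifted_op m z) z) = qform z - m * (norm z)\<^sup>2"
  using resolvent_symmetric[OF resolvent_in_M[OF assms] assms]
  by (simp add: shifted_op_def qform_def cinner_diff_left cinner_scaleR_left power2_norm_eq_cinner)

lemma shifted_op_bounded: "\<exists>K>0. \<forall>z\<in>M. norm (shifted_op m z) \<le> K * norm z"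
proof -
  obtain C where "C \<ge> 0" and C: "\<And>z. z \<in> M \<Longrightarrow> norm (resolvent z) \<le> C * norm z"
    using resolvent_bounded by blast
  have "norm (shifted_op m z) \<le> (C + C * C + \<bar>m\<bar> + 1) * norm z" if "z \<in> M" for z
  proof -
    have "norm (resolvent (resolvent z)) \<le> C * (C * norm z)"
      using C[OF resolvent_in_M[OF that]] mult_left_mono[OF C[OF that] \<open>C \<ge> 0\<close>] by linarith
    then have "norm (shifted_op m z) \<le> C * norm z + C * (C * norm z) + \<bar>m\<bar> * norm z"
      unfolding shifted_op_def using C[OF that]
      by (smt (verit) norm_scaleR norm_triangle_ineq4)
    then show ?thesis
      using norm_ge_zero[of z] by (simp add: algebra_simps, linarith)
  qed
  moreover have "C + C * C + \<bar>m\<bar> + 1 > 0"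
    using \<open>C \<ge> 0\<close> by (simp add: add_nonneg_pos)
  ultimately show ?thesis
    by blast
qed

lemma shifted_op_norm_square_le:
  assumes nonneg: "\<And>z. z \<in> M \<Longrightarrow> m * (norm z)\<^sup>2 \<le> qform z"
  shows "\<exists>K>0. \<forall>z\<in>M. (norm (shifted_op m z))\<^sup>2 \<le> K * (qform z - m * (norm z)\<^sup>2)"
proof -
  obtain K where "K > 0" and K: "\<And>z. z \<in> M \<Longrightarrow> norm (shifted_op m z) \<le> K * norm z"
    using shifted_op_bounded by blast
  have Re_nonneg: "0 \<le> Re (cinner (shifted_op m z) z)" if "z \<in> M" for z
    using nonneg[OF that] by (simp add: Re_cinner_shifted_op[OF that])
  have "(norm (shifted_op m z))\<^sup>2 \<le> K * Re (cinner (shifted_op m z) z)" if "z \<in> M" for z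
    using csubspace_M shifted_op_in_M shifted_op_diff_scaleR shifted_op_symmetric K \<open>K > 0\<close>
      Re_nonneg that
    by (rule nonneg_symmetric_norm_square_le)
  then have "(norm (shifted_op m z))\<^sup>2 \<le> K * (qform z - m * (norm z)\<^sup>2)" if "z \<in> M" for z
    using that by (simp add: Re_cinner_shifted_op)
  with \<open>K > 0\<close> show ?thesis
    by blast
qed

lemma qform_lower_bound: "\<exists>c. \<forall>z\<in>M. c * (norm z)\<^sup>2 \<le> qform z"
proof -
  obtain C where "C \<ge> 0" and C: "\<And>z. z \<in> M \<Longrightarrow> norm (resolvent z) \<le> C * norm z"
    using resolvent_bounded by blast
  have "- (C + C\<^sup>2) * (norm z)\<^sup>2 \<le> qform z" if "z \<in> M" for z
  proof -
    have "- (norm (resolvent z) * norm z) \<le> Re (cinner (resolvent z) z)"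
      using cauchy_schwarz[of "resolvent z" z] abs_Re_le_cmod[of "cinner (resolvent z) z"]
      by linarith
    moreover have "norm (resolvent z) * norm z \<le> C * (norm z)\<^sup>2"
      using mult_right_mono[OF C[OF that] norm_ge_zero[of z]] by (simp add: power2_eq_square)
    moreover have "(norm (resolvent z))\<^sup>2 \<le> (C * norm z)\<^sup>2"
      using C[OF that] by (simp add: power_mono)
    ultimately show ?thesis
      unfolding qform_def by (simp add: power_mult_distrib algebra_simps)
  qed
  then show ?thesis
    by blast
qed

lemma shifted_op_bounded_below:
  assumes "m < 0"
  shows "\<exists>\<gamma>>0. \<forall>z\<in>M. \<gamma> * norm z \<le> norm (shifted_op m z)"
proof -
  \<comment> \<open>\<open>shifted_op m = -(R - t\<^sub>1)(R - t\<^sub>2)\<close> for the roots \<open>t\<^sub>1 > 1\<close>, \<open>t\<^sub>2 < 0\<close> of \<open>t - t\<^sup>2 = m\<close>\<close>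
  define s where "s = sqrt (1 - 4 * m)"
  define t1 where "t1 = (1 + s) / 2"
  define t2 where "t2 = (1 - s) / 2"
  have "s > 1"
    unfolding s_def using assms by (simp add: real_less_rsqrt)
  have t1: "t1 = 1 - t2"
    unfolding t1_def t2_def by (simp add: field_simps)
  have m: "m = (1 - t2) * t2"
    unfolding t2_def using assms by (simp add: s_def field_simps power2_eq_square)
  obtain g1 where "g1 > 0" and g1: "\<And>z. z \<in> M \<Longrightarrow> g1 * norm z \<le> norm (resolvent z - t1 *\<^sub>R z)"
    using resolvent_minus_bounded_below[of t1] \<open>s > 1\<close> unfolding t1_def by auto
  obtain g2 where "g2 > 0" and g2: "\<And>z. z \<in> M \<Longrightarrow> g2 * norm z \<le> norm (resolvent z - t2 *\<^sub>R z)"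
    using resolvent_minus_bounded_below[of t2] \<open>s > 1\<close> unfolding t2_def by auto
  have "g1 * g2 * norm z \<le> norm (shifted_op m z)" if z: "z \<in> M" for z
  proof -
    define w where "w = resolvent z - t2 *\<^sub>R z"
    have "w \<in> M"
      unfolding w_def using z csubspace_M by (intro csubspace_diff csubspace_scaleR resolvent_in_M)
    have "resolvent w - t1 *\<^sub>R w = - shifted_op m z"
      unfolding w_def shifted_op_def t1 m using resolvent_diff_scaleR[OF resolvent_in_M[OF z] z]
      by (simp add: algebra_simps scaleR_diff_right)
    then have "g1 * norm w \<le> norm (shifted_op m z)"
      using g1[OF \<open>w \<in> M\<close>] by simp
    moreover have "g2 * norm z \<le> norm w"
      unfolding w_def by (rule g2[OF z])
    ultimately show ?thesis
      using \<open>g1 > 0\<close> by (smt (verit, best) mult.assoc mult_left_mono)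
  qed
  with \<open>g1 > 0\<close> \<open>g2 > 0\<close> show ?thesis
    by (intro exI[of _ "g1 * g2"]) simp
qed

text \<open>A sharp negative lower bound \<open>m\<close> would be an approximate eigenvalue of \<open>R - R\<^sup>2\<close>,
  which \<open>shifted_op_bounded_below\<close> rules out; so the bound can be raised.\<close>
lemma qform_lower_bound_increase:
  assumes "m < 0" and bound: "\<And>z. z \<in> M \<Longrightarrow> m * (norm z)\<^sup>2 \<le> qform z"
  shows "\<exists>\<eta>>0. \<forall>z\<in>M. (m + \<eta>) * (norm z)\<^sup>2 \<le> qform z"
proof -
  obtain K where "K > 0" and K: "\<And>z. z \<in> M \<Longrightarrow> (norm (shifted_op m z))\<^sup>2 \<le> K * (qform z - m * (norm z)\<^sup>2)"
    using shifted_op_norm_square_le[OF bound] by blast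
  obtain \<gamma> where "\<gamma> > 0" and \<gamma>: "\<And>z. z \<in> M \<Longrightarrow> \<gamma> * norm z \<le> norm (shifted_op m z)"
    using shifted_op_bounded_below[OF \<open>m < 0\<close>] by blast
  have "(m + \<gamma>\<^sup>2 / K) * (norm z)\<^sup>2 \<le> qform z" if "z \<in> M" for z
  proof -
    have "(\<gamma> * norm z)\<^sup>2 \<le> K * (qform z - m * (norm z)\<^sup>2)"
      using \<gamma>[OF that] K[OF that] \<open>\<gamma> > 0\<close> by (smt (verit) power_mono zero_le_mult_iff norm_ge_zero)
    then show ?thesis
      using \<open>K > 0\<close> by (simp add: field_simps power_mult_distrib)
  qed
  with \<open>\<gamma> > 0\<close> \<open>K > 0\<close> show ?thesis
    by (intro exI[of _ "\<gamma>\<^sup>2 / K"]) simp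
qed

lemma qform_nonneg:
  assumes "z \<in> M"
  shows "0 \<le> qform z"
proof (rule ccontr)
  assume "\<not> 0 \<le> qform z"
  then have "z \<noteq> 0"
    using qform_zero by auto
  define Q where "Q = (\<lambda>z. qform z / (norm z)\<^sup>2) ` (M - {0})"
  define m where "m = Inf Q"
  obtain c where c: "\<And>z. z \<in> M \<Longrightarrow> c * (norm z)\<^sup>2 \<le> qform z"
    using qform_lower_bound by blast
  have "Q \<noteq> {}"
    unfolding Q_def using assms \<open>z \<noteq> 0\<close> by blast
  have "c \<le> qform y / (norm y)\<^sup>2" if "y \<in> M" "y \<noteq> 0" for y
    using c[OF that(1)] that(2) by (simp add: pos_le_divide_eq)
  then have "bdd_below Q"
    unfolding Q_def by (intro bdd_belowI[of _ c]) blast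
  have m_le: "m \<le> qform y / (norm y)\<^sup>2" if "y \<in> M" "y \<noteq> 0" for y
    unfolding m_def using that \<open>bdd_below Q\<close> by (intro cInf_lower) (auto simp: Q_def)
  have bound: "m * (norm y)\<^sup>2 \<le> qform y" if "y \<in> M" for y
    using m_le[OF that] qform_zero by (cases "y = 0") (auto simp: pos_le_divide_eq)
  have "m < 0"
    using m_le[OF assms \<open>z \<noteq> 0\<close>] \<open>\<not> 0 \<le> qform z\<close> \<open>z \<noteq> 0\<close>
    by (smt (verit) divide_neg_pos zero_less_norm_iff zero_less_power)
  then obtain \<eta> where "\<eta> > 0" and \<eta>: "\<And>y. y \<in> M \<Longrightarrow> (m + \<eta>) * (norm y)\<^sup>2 \<le> qform y"
    using qform_lower_bound_increase bound by blast
  have "m + \<eta> \<le> qform y / (norm y)\<^sup>2" if "y \<in> M" "y \<noteq> 0" for y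
    using \<eta>[OF that(1)] that(2) by (simp add: pos_le_divide_eq)
  then have "m + \<eta> \<le> Inf Q"
    using \<open>Q \<noteq> {}\<close> unfolding Q_def by (intro cInf_greatest) auto
  then have "m + \<eta> \<le> m"
    unfolding m_def .
  with \<open>\<eta> > 0\<close> show False
    by simp
qed

text \<open>Since \<open>A \<ge> 0\<close>, the Cauchy--Schwarz argument for \<open>R - R\<^sup>2 \<ge> 0\<close> forces \<open>R x = x\<close>, i.e.
  \<open>A x = 0\<close>, for isotropic \<open>x\<close>.\<close>
lemma op_part_isotropic_imp_kernel:
  assumes "(x, y) \<in> A" "cinner y x = 0"
  shows "(x, 0) \<in> N"
proof -
  define z where "z = y + x"
  have "z \<in> M"
    unfolding z_def using assms(1) csubspace_add[OF csubspace_M] op_part_iff by blast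
  have "resolvent z = x"
    unfolding z_def by (rule resolvent_unique[OF assms(1)])
  have "qform z = 0"
    unfolding z_def using qform_op_part[OF assms(1)] assms(2) by simp
  obtain K where K: "\<And>z. z \<in> M \<Longrightarrow> (norm (shifted_op 0 z))\<^sup>2 \<le> K * (qform z - 0 * (norm z)\<^sup>2)"
    using shifted_op_norm_square_le[of 0] qform_nonneg by auto
  have "shifted_op 0 z = 0"
    using K[OF \<open>z \<in> M\<close>] \<open>qform z = 0\<close> by simp
  then have "resolvent x = x"
    unfolding shifted_op_def \<open>resolvent z = x\<close> by simp
  moreover have "x \<in> M"
    using assms(1) op_part_iff by blast
  ultimately show ?thesis
    using resolvent_pair[of x] op_part_iff by auto
qed

end

definition shifted_form ::
  "('v::complex_vector \<Rightarrow> 'v \<Rightarrow> complex) \<Rightarrow> ('v \<Rightarrow> 'h::complex_inner) \<Rightarrow> real \<Rightarrow> 'v \<Rightarrow> 'v \<Rightarrow> complex" where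
  "shifted_form a i lam u v = a u v - complex_of_real lam * cinner (i u) (i v)"

definition form_kernel ::
  "('v::complex_vector \<Rightarrow> 'v \<Rightarrow> complex) \<Rightarrow> ('v \<Rightarrow> 'h::complex_inner) \<Rightarrow> real \<Rightarrow> 'v set" where
  "form_kernel a i lam = {u. \<forall>v. shifted_form a i lam u v = 0}"

lemma Ngraph_iff:
  "(x, y) \<in> Ngraph a i j lam \<longleftrightarrow> (\<exists>u. x = j u \<and> (\<forall>v. shifted_form a i lam u v = cinner y (j v)))"
  unfolding Ngraph_def shifted_form_def by auto

lemma shifted_form_add_left:
  assumes "sesquilinear a" "clinear i"
  shows "shifted_form a i lam (u + w) v = shifted_form a i lam u v + shifted_form a i lam w v"
proof -
  have "a (u + w) v = a u v + a w v"
    using assms(1) unfolding sesquilinear_def by blast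
  then show ?thesis
    by (simp add: shifted_form_def clinear_add[OF assms(2)] cinner_add_left algebra_simps)
qed

lemma shifted_form_scaleC_left:
  assumes "sesquilinear a" "clinear i"
  shows "shifted_form a i lam (c *\<^sub>C u) v = c * shifted_form a i lam u v"
proof -
  have "a (c *\<^sub>C u) v = c * a u v"
    using assms(1) unfolding sesquilinear_def by blast
  then show ?thesis
    by (simp add: shifted_form_def clinear_scaleC[OF assms(2)] cinner_scaleC_left algebra_simps)
qed

lemma shifted_form_cnj:
  assumes "symmetric_form a"
  shows "shifted_form a i lam u v = cnj (shifted_form a i lam v u)"
proof -
  have "a u v = cnj (a v u)"
    using assms unfolding symmetric_form_def by blast
  then show ?thesis
    using cinner_cnj_commute[of "i u" "i v"] by (simp add: shifted_form_def)
qed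

lemma csubspace_form_kernel:
  assumes "sesquilinear a" "clinear i"
  shows "csubspace (form_kernel a i lam)"
proof (rule csubspaceI)
  have "shifted_form a i lam 0 v = 0" for v
    using shifted_form_scaleC_left[OF assms, where c = 0 and u = 0] by simp
  then show "0 \<in> form_kernel a i lam"
    by (simp add: form_kernel_def)
next
  fix u w assume "u \<in> form_kernel a i lam" "w \<in> form_kernel a i lam"
  then show "u + w \<in> form_kernel a i lam"
    by (simp add: form_kernel_def shifted_form_add_left[OF assms])
next
  fix c u assume "u \<in> form_kernel a i lam"
  then show "c *\<^sub>C u \<in> form_kernel a i lam"
    by (simp add: form_kernel_def shifted_form_scaleC_left[OF assms])
qed


lemma form_kernel_not_infinite_cdim:
  assumes "compact_op i" "sesquilinear a" "elliptic_form a i"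
  shows "\<not> infinite_cdim (form_kernel a i lam)"
proof -
  obtain \<omega> \<delta> where "\<delta> > 0" and ell: "\<And>u. \<delta> * (norm u)\<^sup>2 \<le> Re (a u u) + \<omega> * (norm (i u))\<^sup>2"
    using assms(3) unfolding elliptic_form_def by blast
  have "norm u \<le> sqrt (\<bar>lam + \<omega>\<bar> / \<delta>) * norm (i u)" if "u \<in> form_kernel a i lam" for u
  proof -
    have "a u u = complex_of_real lam * cinner (i u) (i u)"
      using that by (simp add: form_kernel_def shifted_form_def)
    then have "\<delta> * (norm u)\<^sup>2 \<le> (lam + \<omega>) * (norm (i u))\<^sup>2"
      using ell[of u] by (simp add: cinner_self_eq_norm algebra_simps)
    also have "\<dots> \<le> \<bar>lam + \<omega>\<bar> * (norm (i u))\<^sup>2"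
      by (simp add: mult_right_mono)
    finally have "(norm u)\<^sup>2 \<le> (sqrt (\<bar>lam + \<omega>\<bar> / \<delta>) * norm (i u))\<^sup>2"
      using \<open>\<delta> > 0\<close> by (simp add: power_mult_distrib field_simps)
    then show ?thesis
      by (rule power2_le_imp_le) (use \<open>\<delta> > 0\<close> in simp)
  qed
  moreover have "clinear i"
    using assms(1) unfolding compact_op_def by blast
  ultimately show ?thesis
    by (intro compact_op_dominated_not_infinite_cdim[OF assms(1)] csubspace_form_kernel assms(2))
qed

lemma Ngraph_kernel:
  assumes "(x, 0) \<in> Ngraph a i j lam"
  shows "x \<in> j ` form_kernel a i lam"
proof -
  obtain u where "x = j u" "\<And>v. shifted_form a i lam u v = cinner 0 (j v)"
    using assms unfolding Ngraph_iff by blast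
  then show ?thesis
    unfolding form_kernel_def by simp
qed

lemma Ngraph_add:
  assumes "sesquilinear a" "clinear i" "clinear j"
    and "(x, y) \<in> Ngraph a i j lam" "(x', y') \<in> Ngraph a i j lam"
  shows "(x + x', y + y') \<in> Ngraph a i j lam"
proof -
  obtain u u' where u: "x = j u" "\<And>v. shifted_form a i lam u v = cinner y (j v)"
    and u': "x' = j u'" "\<And>v. shifted_form a i lam u' v = cinner y' (j v)"
    using assms(4,5) unfolding Ngraph_iff by blast
  have "shifted_form a i lam (u + u') v = cinner (y + y') (j v)" for v
    using u(2) u'(2) by (simp add: shifted_form_add_left[OF assms(1,2)] cinner_add_left)
  moreover have "x + x' = j (u + u')"
    using u(1) u'(1) by (simp add: clinear_add[OF assms(3)])
  ultimately show ?thesis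
    unfolding Ngraph_iff by blast
qed

lemma Ngraph_scaleC:
  assumes "sesquilinear a" "clinear i" "clinear j" and "(x, y) \<in> Ngraph a i j lam"
  shows "(c *\<^sub>C x, c *\<^sub>C y) \<in> Ngraph a i j lam"
proof -
  obtain u where u: "x = j u" "\<And>v. shifted_form a i lam u v = cinner y (j v)"
    using assms(4) unfolding Ngraph_iff by blast
  have "shifted_form a i lam (c *\<^sub>C u) v = cinner (c *\<^sub>C y) (j v)" for v
    using u(2) by (simp add: shifted_form_scaleC_left[OF assms(1,2)] cinner_scaleC_left)
  moreover have "c *\<^sub>C x = j (c *\<^sub>C u)"
    using u(1) by (simp add: clinear_scaleC[OF assms(3)])
  ultimately show ?thesis
    unfolding Ngraph_iff by blast
qed

lemma Ngraph_hermitian: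
  assumes "symmetric_form a" and "(x, y) \<in> Ngraph a i j lam" "(x', y') \<in> Ngraph a i j lam"
  shows "cinner y x' = cnj (cinner y' x)"
proof -
  obtain u u' where u: "x = j u" "\<And>v. shifted_form a i lam u v = cinner y (j v)"
    and u': "x' = j u'" "\<And>v. shifted_form a i lam u' v = cinner y' (j v)"
    using assms(2,3) unfolding Ngraph_iff by blast
  have "cinner y x' = shifted_form a i lam u u'"
    using u(2) u'(1) by simp
  also have "\<dots> = cnj (shifted_form a i lam u' u)"
    by (rule shifted_form_cnj[OF assms(1)])
  also have "\<dots> = cnj (cinner y' x)"
    using u'(2) u(1) by simp
  finally show ?thesis .
qed

lemma hermitian_relation_Ngraph:
  assumes "sesquilinear a" "symmetric_form a" "clinear i" "clinear j"
    and "\<And>\<mu>::real. \<mu> < 0 \<Longrightarrow> complex_of_real \<mu> \<notin> graph_spectrum (Ngraph a i j lam)"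
  shows "hermitian_relation_without_negative_spectrum (Ngraph a i j lam)"
proof
  have "shifted_form a i lam 0 v = cinner 0 (j v)" for v
    using shifted_form_scaleC_left[OF assms(1,3), where c = 0 and u = 0] by simp
  then show "(0, 0) \<in> Ngraph a i j lam"
    unfolding Ngraph_iff using clinear_zero[OF assms(4)] by metis
next
  show "(x + x', y + y') \<in> Ngraph a i j lam"
    if "(x, y) \<in> Ngraph a i j lam" "(x', y') \<in> Ngraph a i j lam" for x y x' y'
    using Ngraph_add[OF assms(1,3,4) that] .
next
  show "(c *\<^sub>C x, c *\<^sub>C y) \<in> Ngraph a i j lam" if "(x, y) \<in> Ngraph a i j lam" for x y c
    using Ngraph_scaleC[OF assms(1,3,4) that] .
next
  show "cinner y x' = cnj (cinner y' x)"
    if "(x, y) \<in> Ngraph a i j lam" "(x', y') \<in> Ngraph a i j lam" for x y x' y'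
    using Ngraph_hermitian[OF assms(2) that] .
next
  fix \<mu> :: real assume "\<mu> < 0"
  then show "complex_of_real \<mu> \<in> op_resolvent_set (closure (graph_dom (Ngraph a i j lam)))
      (op_part (Ngraph a i j lam))"
    using assms(5) unfolding graph_spectrum_def op_spectrum_def by blast
qed

theorem lemma2p7:
  fixes i :: "'v::chilbert_space \<Rightarrow> 'h::chilbert_space"
    and j :: "'v \<Rightarrow> 'k::chilbert_space"
    and a :: "'v \<Rightarrow> 'v \<Rightarrow> complex"
    and lam :: real
  assumes i_inj: "inj i"
    and i_compact: "compact_op i"
    and j_compact: "compact_op j"
    and a_sesq: "sesquilinear a"
    and a_sym: "symmetric_form a"
    and a_pos: "positive_form a"
    and a_bdd: "bounded_form a"
    and a_ell: "elliptic_form a i"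
    and lam_pos: "lam > 0"
    and inf_dim: "infinite_cdim {\<phi>. \<exists>\<psi>. (\<phi>, \<psi>) \<in> op_part (Ngraph a i j lam) \<and> cinner \<psi> \<phi> = 0}"
  shows "graph_spectrum (Ngraph a i j lam) \<inter> complex_of_real ` {..<0} \<noteq> {}"
proof
  assume no_neg: "graph_spectrum (Ngraph a i j lam) \<inter> complex_of_real ` {..<0} = {}"
  have lin_i: "clinear i" and lin_j: "clinear j"
    using i_compact j_compact unfolding compact_op_def by blast+
  have "complex_of_real \<mu> \<notin> graph_spectrum (Ngraph a i j lam)" if "\<mu> < 0" for \<mu>
    using no_neg that by blast
  then interpret hermitian_relation_without_negative_spectrum "Ngraph a i j lam"
    by (rule hermitian_relation_Ngraph[OF a_sesq a_sym lin_i lin_j])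
  obtain B where "finite B" "cspan (form_kernel a i lam) \<subseteq> cspan B"
    using form_kernel_not_infinite_cdim[OF i_compact a_sesq a_ell] unfolding infinite_cdim_def by blast
  have "{\<phi>. \<exists>\<psi>. (\<phi>, \<psi>) \<in> op_part (Ngraph a i j lam) \<and> cinner \<psi> \<phi> = 0} \<subseteq> j ` form_kernel a i lam"
    using op_part_isotropic_imp_kernel Ngraph_kernel by blast
  also have "\<dots> \<subseteq> j ` cspan B"
    using cspan_superset \<open>cspan (form_kernel a i lam) \<subseteq> cspan B\<close> by blast
  also have "\<dots> \<subseteq> cspan (j ` B)"
    by (rule cspan_image[OF lin_j])
  finally show False
    using inf_dim \<open>finite B\<close> cspan_mono unfolding infinite_cdim_def by blast
qed

end
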